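(* Let $X$ be a shift space and $m\ge1$. The following are equivalent: (i) $X$ is eventually dendric with threshold $m$; (ii) the graph $\mathcal E_n(w)$ is a tree for every $n\ge1$ and every $w\in\mathcal L_{\ge m}(X)$; (iii) there is an integer $n\ge1$ such that $\mathcal E_n(w)$ is a tree for every $w\in\mathcal L_{\ge m}(X)$.
   Context: $A$ is a finite alphabet; a shift space is a closed shift-invariant subset $X\subseteq A^{\mathbb Z}$; $\mathcal L(X)$ is its set of finite factors, $\mathcal L_n(X)=\mathcal L(X)\cap A^n$, $\mathcal L_{\ge n}(X)=\bigcup_{k\ge n}\mathcal L_k(X)$. For $w\in\mathcal L(X)$ and $n\ge1$: $L_n(w)=\{u\in\mathcal L_n(X):uw\in\mathcal L(X)\}$, $R_n(w)=\{v\in\mathcal L_n(X):wv\in\mathcal L(X)\}$, and the extension graph $\mathcal E_n(w)$ is the undirected bipartite graph with vertex set the disjoint union of $L_n(w)$ and $R_n(w)$ and an edge $(u,v)$ iff $uwv\in\mathcal L(X)$. $X$ is eventually dendric with threshold $m$ if $\mathcal E_1(w)$ is a tree for every $w\in\mathcal L_{\ge m}(X)$. *)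

theory Defs
  imports "HOL-Analysis.Analysis"
begin

definition shift :: "(int \<Rightarrow> 'a) \<Rightarrow> (int \<Rightarrow> 'a)" where
  "shift x = (\<lambda>i. x (i + 1))"

definition shift_space :: "'a set \<Rightarrow> (int \<Rightarrow> 'a) set \<Rightarrow> bool" where
  "shift_space A X \<longleftrightarrow> finite A \<and>
     X \<subseteq> PiE UNIV (\<lambda>_. A) \<and>
     closedin (product_topology (\<lambda>_::int. discrete_topology A) UNIV) X \<and>
     shift ` X = X"

text \<open>Finite factors (words are lists); the empty word is included.\<close>
definition lang :: "(int \<Rightarrow> 'a) set \<Rightarrow> 'a list set" where
  "lang X = {w. \<exists>x\<in>X. \<exists>i::int. w = map (\<lambda>k. x (i + int k)) [0..<length w]}"

definition lang_ge :: "(int \<Rightarrow> 'a) set \<Rightarrow> nat \<Rightarrow> 'a list set" where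
  "lang_ge X n = {w \<in> lang X. length w \<ge> n}"

definition left_ext :: "(int \<Rightarrow> 'a) set \<Rightarrow> nat \<Rightarrow> 'a list \<Rightarrow> 'a list set" where
  "left_ext X n w = {u \<in> lang X. length u = n \<and> u @ w \<in> lang X}"

definition right_ext :: "(int \<Rightarrow> 'a) set \<Rightarrow> nat \<Rightarrow> 'a list \<Rightarrow> 'a list set" where
  "right_ext X n w = {v \<in> lang X. length v = n \<and> w @ v \<in> lang X}"

text \<open>Simple undirected graphs given by a vertex set V and a (symmetric) adjacency relation.\<close>
definition graph_connected :: "'v set \<Rightarrow> ('v \<Rightarrow> 'v \<Rightarrow> bool) \<Rightarrow> bool" where
  "graph_connected V E \<longleftrightarrow> V \<noteq> {} \<and>
     (\<forall>x\<in>V. \<forall>y\<in>V. (x, y) \<in> {(p, q). p \<in> V \<and> q \<in> V \<and> E p q}\<^sup>*)"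

definition graph_has_cycle :: "'v set \<Rightarrow> ('v \<Rightarrow> 'v \<Rightarrow> bool) \<Rightarrow> bool" where
  "graph_has_cycle V E \<longleftrightarrow> (\<exists>cs. length cs \<ge> 3 \<and> distinct cs \<and> set cs \<subseteq> V \<and>
     (\<forall>i < length cs - 1. E (cs ! i) (cs ! Suc i)) \<and> E (last cs) (hd cs))"

definition is_tree :: "'v set \<Rightarrow> ('v \<Rightarrow> 'v \<Rightarrow> bool) \<Rightarrow> bool" where
  "is_tree V E \<longleftrightarrow> graph_connected V E \<and> \<not> graph_has_cycle V E"

text \<open>Extension graph E_n(w): vertices Inl ` L_n(w) (left) and Inr ` R_n(w) (right),
  edge between u and v iff u w v is in the language.\<close>
definition ext_vertices :: "(int \<Rightarrow> 'a) set \<Rightarrow> nat \<Rightarrow> 'a list \<Rightarrow> ('a list + 'a list) set" where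
  "ext_vertices X n w = Inl ` left_ext X n w \<union> Inr ` right_ext X n w"

definition ext_edge :: "(int \<Rightarrow> 'a) set \<Rightarrow> nat \<Rightarrow> 'a list \<Rightarrow> ('a list + 'a list) \<Rightarrow> ('a list + 'a list) \<Rightarrow> bool" where
  "ext_edge X n w p q \<longleftrightarrow>
     (\<exists>u v. u \<in> left_ext X n w \<and> v \<in> right_ext X n w \<and> u @ w @ v \<in> lang X \<and>
        ((p = Inl u \<and> q = Inr v) \<or> (p = Inr v \<and> q = Inl u)))"

definition ext_graph_is_tree :: "(int \<Rightarrow> 'a) set \<Rightarrow> nat \<Rightarrow> 'a list \<Rightarrow> bool" where
  "ext_graph_is_tree X n w \<longleftrightarrow> is_tree (ext_vertices X n w) (ext_edge X n w)"

definition eventually_dendric :: "(int \<Rightarrow> 'a) set \<Rightarrow> nat \<Rightarrow> bool" where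
  "eventually_dendric X m \<longleftrightarrow> (\<forall>w \<in> lang_ge X m. ext_graph_is_tree X 1 w)"

end

theory Submission
  imports Defs "HOL-Library.Transitive_Closure_Table"
begin

text \<open>Let E(k, l, w) be the extension graph of w with left extensions of length k and right
  extensions of length l, and let its defect d(k, l, w) be the number of edges minus the number of
  vertices plus one: it is nonnegative on connected graphs and vanishes exactly on trees.
  Splitting a right extension of length l + j as v b makes the defect additive,
  d(k, l + j, w) = d(k, l, w) + \<Sum> d(k, j, w v) over the right extensions v of length l, and
  connectivity of E(k, l, w) and of all E(k, j, w v) passes to E(k, l + j, w); reversing all
  words gives the same on the left. Hence trees at (1, 1) for all long words propagate to every
  (k, l). Conversely, truncating extensions keeps the graphs E(n, n, w) connected, so all defects
  involved are nonnegative, and a vanishing defect at (n, n) forces it to vanish at (n, 1) and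
  then at (1, 1).\<close>

section \<open>Finite simple graphs\<close>

definition graph_rel :: "'v set \<Rightarrow> ('v \<Rightarrow> 'v \<Rightarrow> bool) \<Rightarrow> 'v rel" where
  "graph_rel V E = {(p, q). p \<in> V \<and> q \<in> V \<and> E p q}"

definition graph_edges :: "('v \<Rightarrow> 'v \<Rightarrow> bool) \<Rightarrow> 'v set set" where
  "graph_edges E = {{p, q} | p q. E p q}"

definition remove_edge :: "('v \<Rightarrow> 'v \<Rightarrow> bool) \<Rightarrow> 'v \<Rightarrow> 'v \<Rightarrow> 'v \<Rightarrow> 'v \<Rightarrow> bool" where
  "remove_edge E a b p q \<longleftrightarrow> E p q \<and> {p, q} \<noteq> {a, b}"

lemma graph_connected_iff:
  "graph_connected V E \<longleftrightarrow> V \<noteq> {} \<and> (\<forall>x\<in>V. \<forall>y\<in>V. (x, y) \<in> (graph_rel V E)\<^sup>*)"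
  unfolding graph_connected_def graph_rel_def ..

lemma rtrancl_graph_rel_hom:
  assumes "(x, y) \<in> (graph_rel V E)\<^sup>*"
    and "\<And>p q. p \<in> V \<Longrightarrow> q \<in> V \<Longrightarrow> E p q \<Longrightarrow> f p \<in> V' \<and> f q \<in> V' \<and> E' (f p) (f q)"
  shows "(f x, f y) \<in> (graph_rel V' E')\<^sup>*"
  using assms(1)
proof (induction rule: rtrancl_induct)
  case (step y z)
  then have "(f y, f z) \<in> graph_rel V' E'"
    using assms(2) unfolding graph_rel_def by blast
  with step.IH show ?case by (rule rtrancl_into_rtrancl)
qed simp

lemma graph_connected_image:
  assumes "graph_connected V E" and "f ` V = V'"
    and "\<And>p q. p \<in> V \<Longrightarrow> q \<in> V \<Longrightarrow> E p q \<Longrightarrow> E' (f p) (f q)"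
  shows "graph_connected V' E'"
  unfolding graph_connected_iff
proof (intro conjI ballI)
  show "V' \<noteq> {}" using assms(1,2) unfolding graph_connected_iff by blast
next
  fix x' y' assume "x' \<in> V'" "y' \<in> V'"
  with assms(2) obtain x y where "x \<in> V" "y \<in> V" "x' = f x" "y' = f y" by blast
  with assms show "(x', y') \<in> (graph_rel V' E')\<^sup>*"
    unfolding graph_connected_iff by (blast intro: rtrancl_graph_rel_hom)
qed

lemma graph_has_cycle_image:
  assumes "graph_has_cycle V E" and "inj_on f V" and "f ` V \<subseteq> V'"
    and "\<And>p q. p \<in> V \<Longrightarrow> q \<in> V \<Longrightarrow> E p q \<Longrightarrow> E' (f p) (f q)"
  shows "graph_has_cycle V' E'"
proof -
  obtain cs where cs: "length cs \<ge> 3" "distinct cs" "set cs \<subseteq> V"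
    "\<forall>i < length cs - 1. E (cs ! i) (cs ! Suc i)" "E (last cs) (hd cs)"
    using assms(1) unfolding graph_has_cycle_def by blast
  have "cs \<noteq> []" using cs(1) by auto
  then have "E' (last (map f cs)) (hd (map f cs))"
    using cs assms(4) by (simp add: last_map hd_map subset_iff)
  moreover have "\<forall>i < length cs - 1. E' (map f cs ! i) (map f cs ! Suc i)"
    using cs(3,4) assms(4) by (auto simp: subset_iff)
  moreover have "distinct (map f cs)"
    using cs(2,3) assms(2) by (simp add: distinct_map inj_on_subset)
  ultimately show ?thesis
    unfolding graph_has_cycle_def using cs(1,3) assms(3) by (intro exI[of _ "map f cs"]) auto
qed

context
  fixes f :: "'v \<Rightarrow> 'w" and V :: "'v set" and V' :: "'w set"
    and E :: "'v \<Rightarrow> 'v \<Rightarrow> bool" and E' :: "'w \<Rightarrow> 'w \<Rightarrow> bool"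
  assumes bij: "bij_betw f V V'"
    and adj_iff: "\<And>p q. p \<in> V \<Longrightarrow> q \<in> V \<Longrightarrow> E' (f p) (f q) \<longleftrightarrow> E p q"
begin

lemma graph_iso_inverse:
  shows "bij_betw (inv_into V f) V' V"
    and "\<And>p q. p \<in> V' \<Longrightarrow> q \<in> V' \<Longrightarrow> E (inv_into V f p) (inv_into V f q) \<longleftrightarrow> E' p q"
proof -
  show inv: "bij_betw (inv_into V f) V' V" using bij by (rule bij_betw_inv_into)
  fix p q assume "p \<in> V'" "q \<in> V'"
  then show "E (inv_into V f p) (inv_into V f q) \<longleftrightarrow> E' p q"
    using adj_iff bij_betw_inv_into_right[OF bij] inv by (metis bij_betwE)
qed

lemma graph_connected_iso: "graph_connected V' E' \<longleftrightarrow> graph_connected V E"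
  using graph_connected_image[of V E f V' E'] graph_connected_image[of V' E' "inv_into V f" V E]
    graph_iso_inverse bij adj_iff
  by (metis bij_betw_imp_surj_on)

lemma graph_has_cycle_iso: "graph_has_cycle V' E' \<longleftrightarrow> graph_has_cycle V E"
  using graph_has_cycle_image[of V E f V' E'] graph_has_cycle_image[of V' E' "inv_into V f" V E]
    graph_iso_inverse bij adj_iff
  by (metis bij_betw_def order_refl)

lemma is_tree_iso: "is_tree V' E' \<longleftrightarrow> is_tree V E"
  unfolding is_tree_def using graph_connected_iso graph_has_cycle_iso by simp

end

locale finite_simple_graph =
  fixes V :: "'v set" and E :: "'v \<Rightarrow> 'v \<Rightarrow> bool"
  assumes finite_vertices: "finite V"
    and adj_vertices: "E p q \<Longrightarrow> p \<in> V \<and> q \<in> V"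
    and adj_irrefl: "\<not> E p p"
    and adj_sym: "E p q \<Longrightarrow> E q p"
begin

lemma graph_rel_eq: "graph_rel V E = {(p, q). E p q}"
  unfolding graph_rel_def using adj_vertices by blast

lemma sym_graph_rel: "sym (graph_rel V E)"
  unfolding graph_rel_eq by (auto intro: symI adj_sym)

lemma finite_edges: "finite (graph_edges E)"
proof -
  have "graph_edges E \<subseteq> Pow V" unfolding graph_edges_def using adj_vertices by auto
  then show ?thesis using finite_vertices by (meson finite_Pow_iff finite_subset)
qed

lemma remove_edge_graph: "finite_simple_graph V (remove_edge E a b)"
  by unfold_locales
    (auto simp: remove_edge_def finite_vertices adj_irrefl insert_commute dest: adj_vertices adj_sym)

lemma edges_remove_edge: "graph_edges (remove_edge E a b) = graph_edges E - {{a, b}}"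
  unfolding graph_edges_def remove_edge_def by blast

lemma cycle_if_reachable_without_edge:
  assumes xy: "E x y" and yx: "(y, x) \<in> (graph_rel V (remove_edge E x y))\<^sup>*"
  shows "graph_has_cycle V E"
proof -
  let ?R = "remove_edge E x y"
  have "?R\<^sup>*\<^sup>* y x"
    using yx unfolding finite_simple_graph.graph_rel_eq[OF remove_edge_graph]
    by (simp add: rtranclp_rtrancl_eq)
  then obtain xs where "rtrancl_path ?R y xs x"
    using rtranclp_eq_rtrancl_path by metis
  then obtain ys where path: "rtrancl_path ?R y ys x" and dist: "distinct (y # ys)"
    using rtrancl_path_distinct by metis
  have "x \<noteq> y" using xy adj_irrefl by blast
  then have "ys \<noteq> []" using path by (auto elim: rtrancl_path.cases)
  then have last_ys: "last ys = x" using rtrancl_path_last[OF path] by blast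
  have "length ys \<ge> 2"
  proof (rule ccontr)
    assume "\<not> length ys \<ge> 2"
    with \<open>ys \<noteq> []\<close> last_ys have "ys = [x]" by (cases ys) (auto simp: Suc_le_eq)
    with path have "?R y x" by (auto elim: rtrancl_path.cases)
    then show False unfolding remove_edge_def by (auto simp: insert_commute)
  qed
  moreover have "set (y # ys) \<subseteq> V"
    using rtrancl_path_Range[OF path] adj_vertices xy by (fastforce simp: remove_edge_def)
  moreover have "\<forall>i < length (y # ys) - 1. E ((y # ys) ! i) ((y # ys) ! Suc i)"
    using rtrancl_path_nth[OF path] by (auto simp: remove_edge_def)
  moreover have "E (last (y # ys)) (hd (y # ys))" using xy last_ys \<open>ys \<noteq> []\<close> by simp
  ultimately show ?thesis
    unfolding graph_has_cycle_def using dist by (intro exI[of _ "y # ys"]) auto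
qed

lemma cycle_edge_not_bridge:
  assumes "graph_has_cycle V E"
  obtains a b where "E a b" and "(a, b) \<in> (graph_rel V (remove_edge E a b))\<^sup>*"
proof -
  obtain cs where len: "length cs \<ge> 3" and dist: "distinct cs" and "set cs \<subseteq> V"
    and steps: "\<forall>i < length cs - 1. E (cs ! i) (cs ! Suc i)" and closing: "E (last cs) (hd cs)"
    using assms unfolding graph_has_cycle_def by blast
  define a b where "a = hd cs" and "b = last cs"
  let ?R = "graph_rel V (remove_edge E a b)"
  have "cs \<noteq> []" using len by auto
  then have a: "a = cs ! 0" and b: "b = cs ! (length cs - 1)"
    unfolding a_def b_def by (simp_all add: hd_conv_nth last_conv_nth)
  have "(a, cs ! i) \<in> ?R\<^sup>*" if "i < length cs" for i
    using that
  proof (induction i)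
    case (Suc i)
    have "{cs ! i, cs ! Suc i} \<noteq> {a, b}"
    proof
      assume "{cs ! i, cs ! Suc i} = {a, b}"
      moreover have "i < length cs" "0 < length cs" using Suc.prems by auto
      ultimately have "i = length cs - 1 \<or> (i = 0 \<and> Suc i = length cs - 1)"
        using Suc.prems a b nth_eq_iff_index_eq[OF dist] by (auto simp: doubleton_eq_iff)
      with Suc.prems len show False by auto
    qed
    moreover have "E (cs ! i) (cs ! Suc i)" using steps Suc.prems by simp
    ultimately have "(cs ! i, cs ! Suc i) \<in> ?R"
      using adj_vertices unfolding graph_rel_def remove_edge_def by blast
    with Suc show ?case by (meson Suc_lessD rtrancl_into_rtrancl)
  qed (simp add: a)
  from this[of "length cs - 1"] have "(a, b) \<in> ?R\<^sup>*" using len b by simp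
  moreover have "E a b" using closing adj_sym unfolding a_def b_def by blast
  ultimately show ?thesis using that by blast
qed

lemma connected_remove_edge:
  assumes conn: "graph_connected V E" and ab: "(a, b) \<in> (graph_rel V (remove_edge E a b))\<^sup>*"
  shows "graph_connected V (remove_edge E a b)"
proof -
  let ?R = "graph_rel V (remove_edge E a b)"
  have "(b, a) \<in> ?R\<^sup>*"
    using ab sym_rtrancl[OF finite_simple_graph.sym_graph_rel[OF remove_edge_graph]]
    by (auto dest: symD)
  then have "graph_rel V E \<subseteq> ?R\<^sup>*"
    using ab unfolding graph_rel_def remove_edge_def by (auto simp: doubleton_eq_iff)
  then have "(graph_rel V E)\<^sup>* \<subseteq> ?R\<^sup>*" by (rule rtrancl_subset_rtrancl)
  with conn show ?thesis unfolding graph_connected_iff by blast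
qed

lemma parent_function:
  assumes "graph_connected V E" and "r \<in> V"
  obtains par :: "'v \<Rightarrow> 'v" and d :: "'v \<Rightarrow> nat"
  where "\<And>x. x \<in> V \<Longrightarrow> x \<noteq> r \<Longrightarrow> E (par x) x \<and> d (par x) < d x"
proof -
  let ?S = "graph_rel V E"
  define d where "d x = (LEAST n. (r, x) \<in> ?S ^^ n)" for x
  have "\<exists>p. E p x \<and> d p < d x" if "x \<in> V - {r}" for x
  proof -
    have "(r, x) \<in> ?S\<^sup>*" using assms that unfolding graph_connected_iff by blast
    then obtain n where "(r, x) \<in> ?S ^^ n" using rtrancl_power by blast
    then have rx: "(r, x) \<in> ?S ^^ d x" unfolding d_def by (rule LeastI)
    with that obtain n where dx: "d x = Suc n" by (cases "d x") auto
    with rx obtain p where "(r, p) \<in> ?S ^^ n" and "(p, x) \<in> ?S" by auto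
    then have "d p \<le> n" and "E p x" unfolding d_def graph_rel_def by (auto intro: Least_le)
    with dx show ?thesis by auto
  qed
  then obtain par where "\<forall>x \<in> V - {r}. E (par x) x \<and> d (par x) < d x" by metis
  then show ?thesis using that by blast
qed

lemma reaches_root:
  fixes d :: "'v \<Rightarrow> nat"
  assumes par: "\<And>x. x \<in> V \<Longrightarrow> x \<noteq> r \<Longrightarrow> E (par x) x \<and> d (par x) < d x"
    and T: "\<And>x. x \<in> V \<Longrightarrow> x \<noteq> r \<Longrightarrow> (x, par x) \<in> T"
    and "x \<in> V"
  shows "(x, r) \<in> T\<^sup>*"
  using \<open>x \<in> V\<close>
proof (induction "d x" arbitrary: x rule: less_induct)
  case less
  show ?case
  proof (cases "x = r")
    case False
    then have "par x \<in> V" and "(par x, r) \<in> T\<^sup>*"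
      using less par adj_vertices by blast+
    then show ?thesis using T[OF less.prems False] by (meson converse_rtrancl_into_rtrancl)
  qed simp
qed

lemma card_vertices_le:
  assumes conn: "graph_connected V E"
  shows "card V \<le> card (graph_edges E) + 1"
proof -
  obtain r where r: "r \<in> V" using conn unfolding graph_connected_iff by blast
  obtain par and d :: "'v \<Rightarrow> nat"
    where par: "\<And>x. x \<in> V \<Longrightarrow> x \<noteq> r \<Longrightarrow> E (par x) x \<and> d (par x) < d x"
    using parent_function[OF conn r] by metis
  have "inj_on (\<lambda>x. {x, par x}) (V - {r})"
  proof (rule inj_onI)
    fix x y assume x: "x \<in> V - {r}" and y: "y \<in> V - {r}" and eq: "{x, par x} = {y, par y}"
    show "x = y"
    proof (rule ccontr)
      assume "x \<noteq> y"
      with eq have "x = par y" and "y = par x" by (auto simp: doubleton_eq_iff)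
      moreover have "d (par x) < d x" and "d (par y) < d y" using par x y by auto
      ultimately show False by (metis less_asym)
    qed
  qed
  moreover have "(\<lambda>x. {x, par x}) ` (V - {r}) \<subseteq> graph_edges E"
    unfolding graph_edges_def using par adj_sym by blast
  ultimately have "card (V - {r}) \<le> card (graph_edges E)"
    using finite_edges by (rule card_inj_on_le)
  then show ?thesis using card_Suc_Diff1[OF finite_vertices r] by simp
qed

lemma card_edges_le_if_acyclic:
  assumes conn: "graph_connected V E" and acyclic: "\<not> graph_has_cycle V E"
  shows "card (graph_edges E) + 1 \<le> card V"
proof -
  obtain r where r: "r \<in> V" using conn unfolding graph_connected_iff by blast
  obtain par and d :: "'v \<Rightarrow> nat"
    where par: "\<And>x. x \<in> V \<Longrightarrow> x \<noteq> r \<Longrightarrow> E (par x) x \<and> d (par x) < d x"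
    using parent_function[OF conn r] by metis
  let ?g = "\<lambda>x. {x, par x}"
  have "graph_edges E \<subseteq> ?g ` (V - {r})"
  proof
    fix e assume "e \<in> graph_edges E"
    then obtain x y where e: "e = {x, y}" and xy: "E x y" unfolding graph_edges_def by blast
    show "e \<in> ?g ` (V - {r})"
    proof (rule ccontr)
      assume not_parent: "e \<notin> ?g ` (V - {r})"
      \<comment> \<open>then parent edges join both x and y to r without using e\<close>
      let ?T = "graph_rel V (remove_edge E x y)"
      have "(z, par z) \<in> ?T" if "z \<in> V" "z \<noteq> r" for z
        using not_parent e that par[OF that] adj_sym adj_vertices
        unfolding graph_rel_def remove_edge_def by blast
      then have "(x, r) \<in> ?T\<^sup>*" and "(y, r) \<in> ?T\<^sup>*"
        using reaches_root[OF par] xy adj_vertices by blast+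
      then have "(y, x) \<in> ?T\<^sup>*"
        using sym_rtrancl[OF finite_simple_graph.sym_graph_rel[OF remove_edge_graph]]
        by (meson rtrancl_trans symD)
      with acyclic cycle_if_reachable_without_edge[OF xy] show False by blast
    qed
  qed
  then have "card (graph_edges E) \<le> card (V - {r})"
    by (meson card_image_le card_mono finite_Diff finite_imageI finite_vertices le_trans)
  then show ?thesis using card_Suc_Diff1[OF finite_vertices r] by simp
qed

lemma card_vertices_le_if_cycle:
  assumes conn: "graph_connected V E" and cycle: "graph_has_cycle V E"
  shows "card V \<le> card (graph_edges E)"
proof -
  obtain a b where ab: "E a b" and "(a, b) \<in> (graph_rel V (remove_edge E a b))\<^sup>*"
    using cycle_edge_not_bridge[OF cycle] by blast
  then have "graph_connected V (remove_edge E a b)"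
    using connected_remove_edge[OF conn] by blast
  then have "card V \<le> card (graph_edges E - {{a, b}}) + 1"
    using finite_simple_graph.card_vertices_le[OF remove_edge_graph] edges_remove_edge by metis
  moreover have "{a, b} \<in> graph_edges E" using ab unfolding graph_edges_def by blast
  ultimately show ?thesis using finite_edges card_Diff1_less[of "graph_edges E"] by fastforce
qed

theorem is_tree_iff_card_edges:
  assumes "graph_connected V E"
  shows "is_tree V E \<longleftrightarrow> card (graph_edges E) + 1 = card V"
  using assms card_vertices_le card_edges_le_if_acyclic card_vertices_le_if_cycle
  unfolding is_tree_def by fastforce

end

section \<open>Extension graphs of a factorial language\<close>

definition left_extensions :: "'a list set \<Rightarrow> nat \<Rightarrow> 'a list \<Rightarrow> 'a list set" where
  "left_extensions L k w = {u. length u = k \<and> u @ w \<in> L}"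

definition right_extensions :: "'a list set \<Rightarrow> nat \<Rightarrow> 'a list \<Rightarrow> 'a list set" where
  "right_extensions L l w = {v. length v = l \<and> w @ v \<in> L}"

definition bi_extensions :: "'a list set \<Rightarrow> nat \<Rightarrow> nat \<Rightarrow> 'a list \<Rightarrow> ('a list \<times> 'a list) set" where
  "bi_extensions L k l w = {(u, v). length u = k \<and> length v = l \<and> u @ w @ v \<in> L}"

text \<open>The extension graph with left extensions of length k and right extensions of length l;
  the paper's \<open>\<E>\<^sub>n(w)\<close> is the case k = l = n.\<close>
definition ext_graph_vertices :: "'a list set \<Rightarrow> nat \<Rightarrow> nat \<Rightarrow> 'a list \<Rightarrow> ('a list + 'a list) set" where
  "ext_graph_vertices L k l w = Inl ` left_extensions L k w \<union> Inr ` right_extensions L l w"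

definition ext_graph_adj ::
  "'a list set \<Rightarrow> nat \<Rightarrow> nat \<Rightarrow> 'a list \<Rightarrow> 'a list + 'a list \<Rightarrow> 'a list + 'a list \<Rightarrow> bool" where
  "ext_graph_adj L k l w p q \<longleftrightarrow>
     (\<exists>u v. (u, v) \<in> bi_extensions L k l w \<and> (p = Inl u \<and> q = Inr v \<or> p = Inr v \<and> q = Inl u))"

definition ext_graph_connected :: "'a list set \<Rightarrow> nat \<Rightarrow> nat \<Rightarrow> 'a list \<Rightarrow> bool" where
  "ext_graph_connected L k l w \<longleftrightarrow> graph_connected (ext_graph_vertices L k l w) (ext_graph_adj L k l w)"

definition ext_graph_tree :: "'a list set \<Rightarrow> nat \<Rightarrow> nat \<Rightarrow> 'a list \<Rightarrow> bool" where
  "ext_graph_tree L k l w \<longleftrightarrow> is_tree (ext_graph_vertices L k l w) (ext_graph_adj L k l w)"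

definition ext_defect :: "'a list set \<Rightarrow> nat \<Rightarrow> nat \<Rightarrow> 'a list \<Rightarrow> int" where
  "ext_defect L k l w = int (card (bi_extensions L k l w)) + 1
     - int (card (left_extensions L k w)) - int (card (right_extensions L l w))"

definition all_ext_graphs_trees :: "'a list set \<Rightarrow> nat \<Rightarrow> nat \<Rightarrow> nat \<Rightarrow> bool" where
  "all_ext_graphs_trees L m k l \<longleftrightarrow> (\<forall>w\<in>L. m \<le> length w \<longrightarrow> ext_graph_tree L k l w)"

lemma mem_left_extensions [simp]: "u \<in> left_extensions L k w \<longleftrightarrow> length u = k \<and> u @ w \<in> L"
  unfolding left_extensions_def by simp

lemma mem_right_extensions [simp]: "v \<in> right_extensions L l w \<longleftrightarrow> length v = l \<and> w @ v \<in> L"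
  unfolding right_extensions_def by simp

lemma mem_bi_extensions [simp]:
  "(u, v) \<in> bi_extensions L k l w \<longleftrightarrow> length u = k \<and> length v = l \<and> u @ w @ v \<in> L"
  unfolding bi_extensions_def by simp

lemma ext_graph_adj_sym: "ext_graph_adj L k l w p q \<Longrightarrow> ext_graph_adj L k l w q p"
  unfolding ext_graph_adj_def by blast

lemma ext_graph_connected_if_tree: "ext_graph_tree L k l w \<Longrightarrow> ext_graph_connected L k l w"
  unfolding ext_graph_tree_def ext_graph_connected_def is_tree_def by simp

lemma mem_rev_image: "x \<in> rev ` L \<longleftrightarrow> rev x \<in> L"
  by (metis image_iff rev_rev_ident)

lemma left_extensions_rev: "left_extensions (rev ` L) k (rev w) = rev ` right_extensions L k w"
  unfolding set_eq_iff by (simp add: mem_rev_image)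

lemma right_extensions_rev: "right_extensions (rev ` L) l (rev w) = rev ` left_extensions L l w"
  unfolding set_eq_iff by (simp add: mem_rev_image)

text \<open>Statements about left extensions are obtained from those about right extensions through
  this symmetry.\<close>
lemma ext_graph_rev_iso:
  defines "f \<equiv> case_sum (\<lambda>u. Inr (rev u)) (\<lambda>v. Inl (rev v))"
  shows "bij_betw f (ext_graph_vertices L k l w) (ext_graph_vertices (rev ` L) l k (rev w))"
    and "ext_graph_adj (rev ` L) l k (rev w) (f p) (f q) \<longleftrightarrow> ext_graph_adj L k l w p q"
proof -
  have "inj f" unfolding f_def by (rule injI) (auto split: sum.splits)
  moreover have "f ` ext_graph_vertices L k l w = ext_graph_vertices (rev ` L) l k (rev w)"
    unfolding ext_graph_vertices_def left_extensions_rev right_extensions_rev f_def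
    by (auto simp: image_Un image_image)
  ultimately show "bij_betw f (ext_graph_vertices L k l w) (ext_graph_vertices (rev ` L) l k (rev w))"
    unfolding bij_betw_def using inj_on_subset by blast
  show "ext_graph_adj (rev ` L) l k (rev w) (f p) (f q) \<longleftrightarrow> ext_graph_adj L k l w p q"
    unfolding f_def ext_graph_adj_def by (cases p; cases q) (auto simp: mem_rev_image)
qed

lemma ext_graph_connected_rev:
  "ext_graph_connected (rev ` L) l k (rev w) \<longleftrightarrow> ext_graph_connected L k l w"
  unfolding ext_graph_connected_def
  by (rule graph_connected_iso[where E = "ext_graph_adj L k l w", OF ext_graph_rev_iso])

lemma ext_graph_tree_rev: "ext_graph_tree (rev ` L) l k (rev w) \<longleftrightarrow> ext_graph_tree L k l w"
  unfolding ext_graph_tree_def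
  by (rule is_tree_iso[where E = "ext_graph_adj L k l w", OF ext_graph_rev_iso])

locale bi_extendable_language =
  fixes L :: "'a list set"
  assumes factorial: "u @ w @ v \<in> L \<Longrightarrow> w \<in> L"
    and extendable_left: "w \<in> L \<Longrightarrow> \<exists>a. a # w \<in> L"
    and extendable_right: "w \<in> L \<Longrightarrow> \<exists>a. w @ [a] \<in> L"
    and finite_words_of_length: "finite {w \<in> L. length w = n}"
begin

lemma prefix_closed: "u @ v \<in> L \<Longrightarrow> u \<in> L"
  using factorial[of "[]" u v] by simp

lemma suffix_closed: "u @ v \<in> L \<Longrightarrow> v \<in> L"
  using factorial[of u v "[]"] by simp

lemma extend_left: "w \<in> L \<Longrightarrow> \<exists>u. length u = k \<and> u @ w \<in> L"
proof (induction k)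
  case (Suc k)
  then obtain u a where "length u = k" "a # u @ w \<in> L" using extendable_left by fastforce
  then show ?case by (intro exI[of _ "a # u"]) simp
qed simp

lemma extend_right: "w \<in> L \<Longrightarrow> \<exists>v. length v = l \<and> w @ v \<in> L"
proof (induction l)
  case (Suc l)
  then obtain v a where "length v = l" "(w @ v) @ [a] \<in> L" using extendable_right by blast
  then show ?case by (intro exI[of _ "v @ [a]"]) simp
qed simp

lemma finite_left_extensions: "finite (left_extensions L k w)"
  by (rule finite_subset[OF _ finite_words_of_length[of k]]) (auto dest: prefix_closed)

lemma finite_right_extensions: "finite (right_extensions L l w)"
  by (rule finite_subset[OF _ finite_words_of_length[of l]]) (auto dest: suffix_closed)

lemma bi_extensions_subset:
  "bi_extensions L k l w \<subseteq> left_extensions L k w \<times> right_extensions L l w"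
proof (rule subrelI)
  fix u v assume "(u, v) \<in> bi_extensions L k l w"
  then show "(u, v) \<in> left_extensions L k w \<times> right_extensions L l w"
    using prefix_closed[of "u @ w" v] suffix_closed[of u "w @ v"] by simp
qed

lemma finite_bi_extensions: "finite (bi_extensions L k l w)"
  using finite_subset[OF bi_extensions_subset] finite_left_extensions finite_right_extensions
  by blast

lemma ext_graph: "finite_simple_graph (ext_graph_vertices L k l w) (ext_graph_adj L k l w)"
proof
  show "finite (ext_graph_vertices L k l w)"
    unfolding ext_graph_vertices_def using finite_left_extensions finite_right_extensions by simp
next
  fix p q assume "ext_graph_adj L k l w p q"
  then show "p \<in> ext_graph_vertices L k l w \<and> q \<in> ext_graph_vertices L k l w"
    using bi_extensions_subset unfolding ext_graph_adj_def ext_graph_vertices_def by blast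
qed (auto simp: ext_graph_adj_def intro: ext_graph_adj_sym)

lemma card_ext_graph_vertices:
  "card (ext_graph_vertices L k l w) = card (left_extensions L k w) + card (right_extensions L l w)"
  unfolding ext_graph_vertices_def
  by (subst card_Un_disjoint) (auto simp: card_image finite_left_extensions finite_right_extensions)

lemma card_ext_graph_edges: "card (graph_edges (ext_graph_adj L k l w)) = card (bi_extensions L k l w)"
proof -
  let ?e = "\<lambda>(u, v). {Inl u, Inr v}"
  have "graph_edges (ext_graph_adj L k l w) = ?e ` bi_extensions L k l w"
  proof
    show "graph_edges (ext_graph_adj L k l w) \<subseteq> ?e ` bi_extensions L k l w"
    proof
      fix e assume "e \<in> graph_edges (ext_graph_adj L k l w)"
      then obtain p q where e: "e = {p, q}" and "ext_graph_adj L k l w p q"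
        unfolding graph_edges_def by blast
      then obtain u v where uv: "(u, v) \<in> bi_extensions L k l w"
        and "p = Inl u \<and> q = Inr v \<or> p = Inr v \<and> q = Inl u"
        unfolding ext_graph_adj_def by blast
      then have "e = {Inl u, Inr v}" using e by (elim disjE) (simp_all add: insert_commute)
      with uv show "e \<in> ?e ` bi_extensions L k l w" by (intro rev_image_eqI[of "(u, v)"]) simp_all
    qed
    show "?e ` bi_extensions L k l w \<subseteq> graph_edges (ext_graph_adj L k l w)"
    proof clarify
      fix u v assume "(u, v) \<in> bi_extensions L k l w"
      then have "ext_graph_adj L k l w (Inl u) (Inr v)" unfolding ext_graph_adj_def by blast
      then show "{Inl u, Inr v} \<in> graph_edges (ext_graph_adj L k l w)"
        unfolding graph_edges_def by blast
    qed
  qed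
  moreover have "inj_on ?e (bi_extensions L k l w)"
  proof (rule inj_onI, clarify)
    fix u v u' v' assume "{Inl u, Inr v} = {Inl u', Inr v'}"
    then show "u = u' \<and> v = v'" by (simp add: doubleton_eq_iff)
  qed
  ultimately show ?thesis by (simp add: card_image)
qed

lemma ext_defect_nonneg: "ext_graph_connected L k l w \<Longrightarrow> 0 \<le> ext_defect L k l w"
  using finite_simple_graph.card_vertices_le[OF ext_graph]
  unfolding ext_graph_connected_def ext_defect_def card_ext_graph_vertices card_ext_graph_edges
  by fastforce

lemma ext_graph_tree_iff_defect:
  "ext_graph_connected L k l w \<Longrightarrow> ext_graph_tree L k l w \<longleftrightarrow> ext_defect L k l w = 0"
  using finite_simple_graph.is_tree_iff_card_edges[OF ext_graph]
  unfolding ext_graph_connected_def ext_graph_tree_def ext_defect_def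
    card_ext_graph_vertices card_ext_graph_edges
  by fastforce

lemma right_extensions_add:
  "right_extensions L (l + j) w
     = (\<lambda>(v, b). v @ b) ` (SIGMA v:right_extensions L l w. right_extensions L j (w @ v))"
proof (rule set_eqI, rule iffI)
  fix x assume "x \<in> right_extensions L (l + j) w"
  then have "(take l x, drop l x) \<in> (SIGMA v:right_extensions L l w. right_extensions L j (w @ v))"
    using prefix_closed[of "w @ take l x" "drop l x"] by simp
  then show "x \<in> (\<lambda>(v, b). v @ b) ` (SIGMA v:right_extensions L l w. right_extensions L j (w @ v))"
    by (rule rev_image_eqI) simp
qed auto

lemma bi_extensions_add_right:
  "bi_extensions L k (l + j) w
     = (\<lambda>(v, u, b). (u, v @ b)) ` (SIGMA v:right_extensions L l w. bi_extensions L k j (w @ v))"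
proof (rule set_eqI, rule iffI)
  fix x assume "x \<in> bi_extensions L k (l + j) w"
  then obtain u y where x: "x = (u, y)" and "length u = k" "length y = l + j" "u @ w @ y \<in> L"
    unfolding bi_extensions_def by blast
  then have "(take l y, u, drop l y)
      \<in> (SIGMA v:right_extensions L l w. bi_extensions L k j (w @ v))"
    using factorial[of u "w @ take l y" "drop l y"] by simp
  then show "x \<in> (\<lambda>(v, u, b). (u, v @ b)) ` (SIGMA v:right_extensions L l w. bi_extensions L k j (w @ v))"
    by (rule rev_image_eqI) (simp add: x)
qed auto

lemma bi_extensions_by_right:
  "bi_extensions L k l w
     = (\<lambda>(v, u). (u, v)) ` (SIGMA v:right_extensions L l w. left_extensions L k (w @ v))"
proof (rule set_eqI, rule iffI)
  fix x assume x: "x \<in> bi_extensions L k l w"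
  then obtain u v where "x = (u, v)" by fastforce
  with x show "x \<in> (\<lambda>(v, u). (u, v)) ` (SIGMA v:right_extensions L l w. left_extensions L k (w @ v))"
    using suffix_closed[of u "w @ v"] by (intro rev_image_eqI[of "(v, u)"]) auto
qed auto

lemma ext_defect_add_right:
  "ext_defect L k (l + j) w
     = ext_defect L k l w + (\<Sum>v\<in>right_extensions L l w. ext_defect L k j (w @ v))"
proof -
  let ?R = "right_extensions L l w"
  have inj1: "inj_on (\<lambda>(v, b). v @ b) (SIGMA v:?R. right_extensions L j (w @ v))"
    by (auto simp: inj_on_def)
  have inj2: "inj_on (\<lambda>(v, u, b). (u, v @ b)) (SIGMA v:?R. bi_extensions L k j (w @ v))"
    by (auto simp: inj_on_def)
  have inj3: "inj_on (\<lambda>(v, u). (u, v)) (SIGMA v:?R. left_extensions L k (w @ v))"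
    by (auto simp: inj_on_def)
  have "card (right_extensions L (l + j) w) = (\<Sum>v\<in>?R. card (right_extensions L j (w @ v)))"
    unfolding right_extensions_add card_image[OF inj1]
    by (simp add: finite_right_extensions)
  moreover have "card (bi_extensions L k (l + j) w) = (\<Sum>v\<in>?R. card (bi_extensions L k j (w @ v)))"
    unfolding bi_extensions_add_right card_image[OF inj2]
    by (simp add: finite_right_extensions finite_bi_extensions)
  moreover have "card (bi_extensions L k l w) = (\<Sum>v\<in>?R. card (left_extensions L k (w @ v)))"
    by (subst bi_extensions_by_right, subst card_image[OF inj3])
      (simp add: finite_right_extensions finite_left_extensions)
  moreover have "int (card ?R) = (\<Sum>v\<in>?R. 1)" by simp
  ultimately show ?thesis
    unfolding ext_defect_def by (simp add: sum_subtractf sum.distrib)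
qed

lemma ext_graph_connected_iff:
  "ext_graph_connected L k l w \<longleftrightarrow> ext_graph_vertices L k l w \<noteq> {} \<and>
     (\<forall>x \<in> ext_graph_vertices L k l w. \<forall>y \<in> ext_graph_vertices L k l w.
        (x, y) \<in> {(p, q). ext_graph_adj L k l w p q}\<^sup>*)"
  unfolding ext_graph_connected_def graph_connected_iff finite_simple_graph.graph_rel_eq[OF ext_graph]
  ..

lemma ext_graph_reaches_left:
  assumes "z \<in> ext_graph_vertices L k l w"
  shows "\<exists>u \<in> left_extensions L k w. (z, Inl u) \<in> {(p, q). ext_graph_adj L k l w p q}\<^sup>*"
proof (cases z)
  case (Inr v)
  with assms have "w @ v \<in> L" and "length v = l" by (auto simp: ext_graph_vertices_def)
  then obtain u where "length u = k" and "u @ w @ v \<in> L" using extend_left[of "w @ v" k] by auto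
  with Inr \<open>length v = l\<close> have "ext_graph_adj L k l w z (Inl u)" and "u \<in> left_extensions L k w"
    unfolding ext_graph_adj_def using prefix_closed[of "u @ w" v] by auto
  then show ?thesis by blast
qed (use assms in \<open>auto simp: ext_graph_vertices_def\<close>)

text \<open>Appending v embeds the extension graph of w v into the one of w.\<close>
lemma ext_graph_add_right_joins_fibre:
  assumes v: "v \<in> right_extensions L l w" and conn: "ext_graph_connected L k j (w @ v)"
    and "u1 \<in> left_extensions L k (w @ v)" and "u2 \<in> left_extensions L k (w @ v)"
  shows "(Inl u1, Inl u2) \<in> {(p, q). ext_graph_adj L k (l + j) w p q}\<^sup>*"
proof -
  let ?f = "map_sum id ((@) v)"
  have "(Inl u1, Inl u2) \<in> {(p, q). ext_graph_adj L k j (w @ v) p q}\<^sup>*"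
    using conn assms(3,4) unfolding ext_graph_connected_iff by (auto simp: ext_graph_vertices_def)
  moreover have "ext_graph_adj L k (l + j) w (?f p) (?f q)"
    if "ext_graph_adj L k j (w @ v) p q" for p q
  proof -
    from that obtain u b where "(u, b) \<in> bi_extensions L k j (w @ v)"
      and pq: "p = Inl u \<and> q = Inr b \<or> p = Inr b \<and> q = Inl u"
      unfolding ext_graph_adj_def by blast
    then have "(u, v @ b) \<in> bi_extensions L k (l + j) w" using v by simp
    with pq show ?thesis unfolding ext_graph_adj_def by auto
  qed
  ultimately have "(?f (Inl u1), ?f (Inl u2)) \<in> {(p, q). ext_graph_adj L k (l + j) w p q}\<^sup>*"
    by (induction rule: rtrancl_induct) (auto intro: rtrancl_into_rtrancl)
  then show ?thesis by simp
qed

text \<open>In the longer graph each right vertex v of the shorter one is blown up into the right part of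
  the connected graph of w v, whose left vertices all stay joined; so the left vertices, to which
  every vertex is adjacent, remain connected.\<close>
lemma ext_graph_connected_add_right:
  assumes conn: "ext_graph_connected L k l w"
    and conn_fibres: "\<And>v. v \<in> right_extensions L l w \<Longrightarrow> ext_graph_connected L k j (w @ v)"
  shows "ext_graph_connected L k (l + j) w"
proof -
  let ?R = "{(p, q). ext_graph_adj L k l w p q}\<^sup>*"
  let ?R' = "{(p, q). ext_graph_adj L k (l + j) w p q}\<^sup>*"
  have walk: "case z of Inl u \<Rightarrow> (Inl u1, Inl u) \<in> ?R'
      | Inr v \<Rightarrow> (\<forall>u \<in> left_extensions L k (w @ v). (Inl u1, Inl u) \<in> ?R')"
    if "(Inl u1, z) \<in> ?R" for u1 z
    using that
  proof (induction rule: rtrancl_induct)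
    case (step y z)
    then obtain u v where uv: "(u, v) \<in> bi_extensions L k l w"
      and yz: "y = Inl u \<and> z = Inr v \<or> y = Inr v \<and> z = Inl u"
      unfolding ext_graph_adj_def by blast
    have u: "u \<in> left_extensions L k (w @ v)" and v: "v \<in> right_extensions L l w"
      using uv suffix_closed[of u "w @ v"] by auto
    from yz show ?case
    proof
      assume "y = Inl u \<and> z = Inr v"
      with step.IH ext_graph_add_right_joins_fibre[OF v conn_fibres[OF v] u]
      show ?case by (auto intro: rtrancl_trans)
    next
      assume "y = Inr v \<and> z = Inl u"
      with step.IH u show ?case by simp
    qed
  qed simp
  have sym_R': "(q, p) \<in> ?R'" if "(p, q) \<in> ?R'" for p q
    using that sym_rtrancl[OF finite_simple_graph.sym_graph_rel[OF ext_graph]]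
    unfolding finite_simple_graph.graph_rel_eq[OF ext_graph] by (auto dest: symD)
  obtain z where "z \<in> ext_graph_vertices L k l w" using conn unfolding ext_graph_connected_iff by blast
  then obtain u0 where "u0 \<in> left_extensions L k w" using ext_graph_reaches_left by blast
  then have "ext_graph_vertices L k (l + j) w \<noteq> {}" unfolding ext_graph_vertices_def by blast
  moreover have "(x, y) \<in> ?R'"
    if x: "x \<in> ext_graph_vertices L k (l + j) w" and y: "y \<in> ext_graph_vertices L k (l + j) w"
    for x y
  proof -
    obtain ux uy where ux: "ux \<in> left_extensions L k w" "(x, Inl ux) \<in> ?R'"
      and uy: "uy \<in> left_extensions L k w" "(y, Inl uy) \<in> ?R'"
      using ext_graph_reaches_left[OF x] ext_graph_reaches_left[OF y] by blast
    have "(Inl ux, Inl uy) \<in> ?R"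
      using conn ux(1) uy(1) unfolding ext_graph_connected_iff by (auto simp: ext_graph_vertices_def)
    then have "(Inl ux, Inl uy) \<in> ?R'" using walk by fastforce
    then show ?thesis using ux(2) sym_R'[OF uy(2)] by (meson rtrancl_trans)
  qed
  ultimately show ?thesis unfolding ext_graph_connected_iff by blast
qed

lemma ext_graph_connected_take_right:
  assumes conn: "ext_graph_connected L k l w" and "l' \<le> l"
  shows "ext_graph_connected L k l' w"
  unfolding ext_graph_connected_def
proof (rule graph_connected_image[OF conn[unfolded ext_graph_connected_def]])
  let ?f = "map_sum id (take l')"
  have take: "x @ take l' v \<in> L" if "x @ v \<in> L" for x v
    using prefix_closed[of "x @ take l' v" "drop l' v"] that by simp
  show "?f ` ext_graph_vertices L k l w = ext_graph_vertices L k l' w"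
  proof
    show "?f ` ext_graph_vertices L k l w \<subseteq> ext_graph_vertices L k l' w"
      using \<open>l' \<le> l\<close> take unfolding ext_graph_vertices_def by auto
    show "ext_graph_vertices L k l' w \<subseteq> ?f ` ext_graph_vertices L k l w"
    proof
      fix z assume z: "z \<in> ext_graph_vertices L k l' w"
      show "z \<in> ?f ` ext_graph_vertices L k l w"
      proof (cases z)
        case (Inr v)
        with z have "length v = l'" "w @ v \<in> L" by (auto simp: ext_graph_vertices_def)
        then obtain b where "length b = l - l'" "(w @ v) @ b \<in> L" using extend_right by blast
        with \<open>length v = l'\<close> \<open>l' \<le> l\<close> have "Inr (v @ b) \<in> ext_graph_vertices L k l w"
          unfolding ext_graph_vertices_def by simp
        moreover have "?f (Inr (v @ b)) = z" using Inr \<open>length v = l'\<close> by simp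
        ultimately show ?thesis by (rule rev_image_eqI[OF _ sym])
      next
        case (Inl u)
        with z have "Inl u \<in> ext_graph_vertices L k l w" by (auto simp: ext_graph_vertices_def)
        moreover have "?f (Inl u) = z" using Inl by simp
        ultimately show ?thesis by (rule rev_image_eqI[OF _ sym])
      qed
    qed
  qed
  fix p q assume "ext_graph_adj L k l w p q"
  then obtain u v where "(u, v) \<in> bi_extensions L k l w"
    and "p = Inl u \<and> q = Inr v \<or> p = Inr v \<and> q = Inl u"
    unfolding ext_graph_adj_def by blast
  moreover from this have "(u, take l' v) \<in> bi_extensions L k l' w"
    using \<open>l' \<le> l\<close> take[of "u @ w" v] by simp
  ultimately show "ext_graph_adj L k l' w (?f p) (?f q)"
    unfolding ext_graph_adj_def by auto
qed

lemma ext_graph_tree_add_right: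
  assumes conn: "ext_graph_connected L k l w"
    and conn_fibres: "\<And>v. v \<in> right_extensions L l w \<Longrightarrow> ext_graph_connected L k j (w @ v)"
  shows "ext_graph_tree L k (l + j) w \<longleftrightarrow>
    ext_graph_tree L k l w \<and> (\<forall>v \<in> right_extensions L l w. ext_graph_tree L k j (w @ v))"
proof -
  let ?\<Sigma> = "\<Sum>v \<in> right_extensions L l w. ext_defect L k j (w @ v)"
  have nonneg: "\<And>v. v \<in> right_extensions L l w \<Longrightarrow> 0 \<le> ext_defect L k j (w @ v)"
    by (rule ext_defect_nonneg[OF conn_fibres])
  have fibre_trees: "(\<forall>v \<in> right_extensions L l w. ext_graph_tree L k j (w @ v))
      \<longleftrightarrow> ?\<Sigma> = 0"
    using ext_graph_tree_iff_defect[OF conn_fibres]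
    by (simp only: sum_nonneg_eq_0_iff[OF finite_right_extensions nonneg] cong: ball_cong)
  have "0 \<le> ?\<Sigma>" using nonneg by (rule sum_nonneg)
  then have "ext_defect L k (l + j) w = 0 \<longleftrightarrow> ext_defect L k l w = 0 \<and> ?\<Sigma> = 0"
    unfolding ext_defect_add_right by (rule add_nonneg_eq_0_iff[OF ext_defect_nonneg[OF conn]])
  then show ?thesis
    using ext_graph_tree_iff_defect[OF ext_graph_connected_add_right[OF conn conn_fibres]]
      ext_graph_tree_iff_defect[OF conn] fibre_trees
    by simp
qed

interpretation mirror: bi_extendable_language "rev ` L"
proof
  show "w \<in> rev ` L" if "u @ w @ v \<in> rev ` L" for u w v
    using that factorial[of "rev v" "rev w" "rev u"] by (simp add: mem_rev_image)
  show "\<exists>a. a # w \<in> rev ` L" if "w \<in> rev ` L" for w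
    using that extendable_right[of "rev w"] by (simp add: mem_rev_image)
  show "\<exists>a. w @ [a] \<in> rev ` L" if "w \<in> rev ` L" for w
    using that extendable_left[of "rev w"] by (simp add: mem_rev_image)
  have "{w \<in> rev ` L. length w = n} = rev ` {w \<in> L. length w = n}" for n
    by (auto simp: mem_rev_image intro: rev_image_eqI)
  then show "finite {w \<in> rev ` L. length w = n}" for n
    using finite_words_of_length by simp
qed

lemma ext_graph_connected_drop_left:
  assumes "ext_graph_connected L k l w" and "k' \<le> k"
  shows "ext_graph_connected L k' l w"
  using mirror.ext_graph_connected_take_right[of l k "rev w" k'] assms
  by (simp add: ext_graph_connected_rev)

lemma ext_graph_tree_add_left:
  assumes conn: "ext_graph_connected L k l w"
    and conn_fibres: "\<And>u. u \<in> left_extensions L k w \<Longrightarrow> ext_graph_connected L j l (u @ w)"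
  shows "ext_graph_tree L (k + j) l w \<longleftrightarrow>
    ext_graph_tree L k l w \<and> (\<forall>u \<in> left_extensions L k w. ext_graph_tree L j l (u @ w))"
proof -
  have rev_fibre: "rev w @ v = rev (rev v @ w)" for v by simp
  have "ext_graph_connected (rev ` L) l k (rev w)"
    using conn by (simp add: ext_graph_connected_rev)
  moreover have "ext_graph_connected (rev ` L) l j (rev w @ v)"
    if "v \<in> right_extensions (rev ` L) k (rev w)" for v
    using that conn_fibres[of "rev v"] unfolding right_extensions_rev rev_fibre
    by (auto simp only: ext_graph_connected_rev rev_rev_ident image_iff)
  ultimately have "ext_graph_tree (rev ` L) l (k + j) (rev w) \<longleftrightarrow>
      ext_graph_tree (rev ` L) l k (rev w) \<and>
      (\<forall>v \<in> right_extensions (rev ` L) k (rev w). ext_graph_tree (rev ` L) l j (rev w @ v))"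
    by (rule mirror.ext_graph_tree_add_right)
  then show ?thesis
    unfolding right_extensions_rev rev_fibre ext_graph_tree_rev by simp
qed

lemma all_ext_graphs_trees_of_letters:
  assumes letters: "all_ext_graphs_trees L m 1 1" and "1 \<le> k" and "1 \<le> l"
  shows "all_ext_graphs_trees L m k l"
proof -
  have right: "all_ext_graphs_trees L m 1 l" if "1 \<le> l" for l
    using that
  proof (induction l rule: nat_induct_at_least)
    case (Suc l)
    show ?case unfolding all_ext_graphs_trees_def
    proof (intro ballI impI)
      fix w assume w: "w \<in> L" "m \<le> length w"
      have "ext_graph_tree L 1 l w" using Suc.IH w unfolding all_ext_graphs_trees_def by blast
      moreover have "ext_graph_tree L 1 1 (w @ v)" if "v \<in> right_extensions L l w" for v
        using letters that w unfolding all_ext_graphs_trees_def by simp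
      ultimately show "ext_graph_tree L 1 (Suc l) w"
        using ext_graph_tree_add_right[of 1 l w 1] by (simp add: ext_graph_connected_if_tree)
    qed
  qed (fact letters)
  show ?thesis
    using \<open>1 \<le> k\<close>
  proof (induction k rule: nat_induct_at_least)
    case (Suc k)
    show ?case unfolding all_ext_graphs_trees_def
    proof (intro ballI impI)
      fix w assume w: "w \<in> L" "m \<le> length w"
      have "ext_graph_tree L k l w" using Suc.IH w unfolding all_ext_graphs_trees_def by blast
      moreover have "ext_graph_tree L 1 l (u @ w)" if "u \<in> left_extensions L k w" for u
        using right[OF \<open>1 \<le> l\<close>] that w unfolding all_ext_graphs_trees_def by simp
      ultimately show "ext_graph_tree L (Suc k) l w"
        using ext_graph_tree_add_left[of k l w 1] by (simp add: ext_graph_connected_if_tree)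
    qed
  qed (use right \<open>1 \<le> l\<close> in blast)
qed

lemma all_ext_graphs_trees_letters:
  assumes trees: "all_ext_graphs_trees L m n n" and "1 \<le> n"
  shows "all_ext_graphs_trees L m 1 1"
proof -
  have conn: "ext_graph_connected L k l w"
    if w: "w \<in> L" "m \<le> length w" and "k \<le> n" "l \<le> n" for w k l
  proof -
    have "ext_graph_connected L n n w"
      using trees w ext_graph_connected_if_tree unfolding all_ext_graphs_trees_def by blast
    then have "ext_graph_connected L n l w" using \<open>l \<le> n\<close> by (rule ext_graph_connected_take_right)
    then show ?thesis using \<open>k \<le> n\<close> by (rule ext_graph_connected_drop_left)
  qed
  have n: "1 + (n - 1) = n" using \<open>1 \<le> n\<close> by simp
  have right_letter: "ext_graph_tree L n 1 w" if w: "w \<in> L" "m \<le> length w" for w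
  proof -
    have "ext_graph_connected L n (n - 1) (w @ v)" if "v \<in> right_extensions L 1 w" for v
      using that w by (intro conn) auto
    from ext_graph_tree_add_right[OF conn[OF w order.refl \<open>1 \<le> n\<close>] this]
    show ?thesis using trees w n unfolding all_ext_graphs_trees_def by simp
  qed
  show ?thesis unfolding all_ext_graphs_trees_def
  proof (intro ballI impI)
    fix w assume w: "w \<in> L" "m \<le> length w"
    have "ext_graph_connected L (n - 1) 1 (u @ w)" if "u \<in> left_extensions L 1 w" for u
      using that w \<open>1 \<le> n\<close> by (intro conn) auto
    from ext_graph_tree_add_left[OF conn[OF w \<open>1 \<le> n\<close> \<open>1 \<le> n\<close>] this]
    show "ext_graph_tree L 1 1 w" using right_letter[OF w] n by simp
  qed
qed

end

section \<open>The language of a shift space\<close>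

lemma lang_iff: "w \<in> lang X \<longleftrightarrow> (\<exists>x\<in>X. \<exists>i. \<forall>k < length w. w ! k = x (i + int k))"
proof
  assume "w \<in> lang X"
  then obtain x i where "x \<in> X" and w: "w = map (\<lambda>k. x (i + int k)) [0..<length w]"
    unfolding lang_def by blast
  have "w ! k = x (i + int k)" if "k < length w" for k
  proof -
    have "w ! k = map (\<lambda>k. x (i + int k)) [0..<length w] ! k" using w by simp
    with that show ?thesis by simp
  qed
  with \<open>x \<in> X\<close> show "\<exists>x\<in>X. \<exists>i. \<forall>k < length w. w ! k = x (i + int k)" by blast
next
  assume "\<exists>x\<in>X. \<exists>i. \<forall>k < length w. w ! k = x (i + int k)"
  then obtain x i where "x \<in> X" and "\<forall>k < length w. w ! k = x (i + int k)" by blast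
  then have "w = map (\<lambda>k. x (i + int k)) [0..<length w]" by (intro nth_equalityI) auto
  with \<open>x \<in> X\<close> show "w \<in> lang X" unfolding lang_def by blast
qed

lemma lang_factorial: "u @ w @ v \<in> lang X \<Longrightarrow> w \<in> lang X"
proof -
  assume "u @ w @ v \<in> lang X"
  then obtain x i where "x \<in> X" and uwv: "\<forall>k < length (u @ w @ v). (u @ w @ v) ! k = x (i + int k)"
    unfolding lang_iff by blast
  have "w ! k = x (i + int (length u) + int k)" if "k < length w" for k
    using uwv[rule_format, of "length u + k"] that by (simp add: nth_append add.assoc)
  with \<open>x \<in> X\<close> show "w \<in> lang X" unfolding lang_iff by blast
qed

lemma lang_extendable_left: "w \<in> lang X \<Longrightarrow> \<exists>a. a # w \<in> lang X"
proof -
  assume "w \<in> lang X"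
  then obtain x i where "x \<in> X" and w: "\<forall>k < length w. w ! k = x (i + int k)"
    unfolding lang_iff by blast
  have "(x (i - 1) # w) ! k = x (i - 1 + int k)" if "k < length (x (i - 1) # w)" for k
    using w that by (cases k) (auto simp: add.commute add.left_commute)
  with \<open>x \<in> X\<close> show ?thesis unfolding lang_iff by blast
qed

lemma lang_extendable_right: "w \<in> lang X \<Longrightarrow> \<exists>a. w @ [a] \<in> lang X"
proof -
  assume "w \<in> lang X"
  then obtain x i where "x \<in> X" and w: "\<forall>k < length w. w ! k = x (i + int k)"
    unfolding lang_iff by blast
  have "(w @ [x (i + int (length w))]) ! k = x (i + int k)"
    if "k < length (w @ [x (i + int (length w))])" for k
    using w that by (auto simp: nth_append less_Suc_eq)
  with \<open>x \<in> X\<close> show ?thesis unfolding lang_iff by blast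
qed

lemma bi_extendable_language_lang:
  assumes "shift_space A X"
  shows "bi_extendable_language (lang X)"
proof
  show "finite {w \<in> lang X. length w = n}" for n
  proof (rule finite_subset[OF _ finite_lists_length_eq])
    have "set w \<subseteq> A" if "w \<in> lang X" for w
    proof -
      from that obtain x i where "x \<in> X" and w: "w = map (\<lambda>k. x (i + int k)) [0..<length w]"
        unfolding lang_def by blast
      have "x j \<in> A" for j using assms \<open>x \<in> X\<close> unfolding shift_space_def by (auto simp: PiE_iff)
      then show ?thesis by (subst w) auto
    qed
    then show "{w \<in> lang X. length w = n} \<subseteq> {w. set w \<subseteq> A \<and> length w = n}" by blast
    show "finite A" using assms unfolding shift_space_def by blast
  qed
qed (use lang_factorial lang_extendable_left lang_extendable_right in blast)+

lemma ext_graph_is_tree_iff: "ext_graph_is_tree X n w \<longleftrightarrow> ext_graph_tree (lang X) n n w"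
proof -
  have left: "left_ext X n w = left_extensions (lang X) n w"
    unfolding left_ext_def using lang_factorial[of "[]" _ w] by auto
  have right: "right_ext X n w = right_extensions (lang X) n w"
    unfolding right_ext_def using lang_factorial[of w _ "[]"] by auto
  have "ext_edge X n w = ext_graph_adj (lang X) n n w"
  proof (intro ext)
    fix p q
    have "u @ w \<in> lang X \<and> w @ v \<in> lang X" if "u @ w @ v \<in> lang X" for u v
      using that lang_factorial[of "[]" "u @ w" v] lang_factorial[of u "w @ v" "[]"] by simp
    then show "ext_edge X n w p q \<longleftrightarrow> ext_graph_adj (lang X) n n w p q"
      unfolding ext_edge_def ext_graph_adj_def left right by auto
  qed
  then show ?thesis
    unfolding ext_graph_is_tree_def ext_graph_tree_def ext_vertices_def ext_graph_vertices_def
      left right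
    by simp
qed

theorem mainTheorem17:
  fixes A :: "'a set" and X :: "(int \<Rightarrow> 'a) set" and m :: nat
  assumes "shift_space A X" and "m \<ge> 1"
  shows "(eventually_dendric X m \<longleftrightarrow>
            (\<forall>n\<ge>1. \<forall>w \<in> lang_ge X m. ext_graph_is_tree X n w))
       \<and> ((\<forall>n\<ge>1. \<forall>w \<in> lang_ge X m. ext_graph_is_tree X n w) \<longleftrightarrow>
            (\<exists>n\<ge>1. \<forall>w \<in> lang_ge X m. ext_graph_is_tree X n w))"
proof -
  interpret bi_extendable_language "lang X"
    using assms(1) by (rule bi_extendable_language_lang)
  have trees: "(\<forall>w \<in> lang_ge X m. ext_graph_is_tree X n w) \<longleftrightarrow> all_ext_graphs_trees (lang X) m n n"
    for n
    unfolding lang_ge_def all_ext_graphs_trees_def ext_graph_is_tree_iff by blast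
  have "eventually_dendric X m \<longleftrightarrow> all_ext_graphs_trees (lang X) m 1 1"
    unfolding eventually_dendric_def trees[of 1, symmetric] ..
  then show ?thesis
    unfolding trees
    using all_ext_graphs_trees_of_letters[of m] all_ext_graphs_trees_letters[of m]
    by (metis order.refl)
qed

end
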